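(* For every $k\ge1$ there is $c>0$ such that the following holds. For every $n>k$ and every weighted $k$-uniform hypergraph $w$ with vertex set $[n]$ such that $w([n])=0$, $$\mathbb{E}_{A,x,y}|w(A\cup\{x\})-w(A\cup\{y\})|\ge c\,n^{-k}\|w\|_1,$$ where the expectation is over a $(k-1)$-set $A\subseteq[n]$ and distinct vertices $x,y\notin A$ chosen uniformly at random.
   Context: $[n]=\{1,\dots,n\}$; a weighted $k$-uniform hypergraph on $[n]$ is a function $w$ from the $k$-subsets of $[n]$ to $\mathbb{R}$; $w([n])=\sum_e w(e)$ and $\|w\|_1=\sum_e|w(e)|$. *)

theory Defs
  imports "HOL-Analysis.Analysis"
begin

definition ksets :: "nat \<Rightarrow> nat \<Rightarrow> nat set set" where
  "ksets n k = {e. e \<subseteq> {1..n} \<and> card e = k}"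

text \<open>A weighted k-uniform hypergraph on [n] is represented by w :: nat set => real,
  of which only the values on ksets n k matter.\<close>
definition total_weight :: "nat \<Rightarrow> nat \<Rightarrow> (nat set \<Rightarrow> real) \<Rightarrow> real" where
  "total_weight n k w = (\<Sum>e\<in>ksets n k. w e)"

definition norm1 :: "nat \<Rightarrow> nat \<Rightarrow> (nat set \<Rightarrow> real) \<Rightarrow> real" where
  "norm1 n k w = (\<Sum>e\<in>ksets n k. \<bar>w e\<bar>)"

definition triples :: "nat \<Rightarrow> nat \<Rightarrow> (nat set \<times> nat \<times> nat) set" where
  "triples n k = {(A, x, y). A \<in> ksets n (k - 1) \<and> x \<in> {1..n} \<and> y \<in> {1..n}
                     \<and> x \<notin> A \<and> y \<notin> A \<and> x \<noteq> y}"

definition exp_diff :: "nat \<Rightarrow> nat \<Rightarrow> (nat set \<Rightarrow> real) \<Rightarrow> real" where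
  "exp_diff n k w = (\<Sum>(A, x, y)\<in>triples n k. \<bar>w (insert x A) - w (insert y A)\<bar>)
                       / real (card (triples n k))"

end

theory Submission
  imports Defs
begin

text \<open>Let P_j be the sum of |w e - w f| over pairs of k-sets differing in j elements and S the sum
  of the local differences |w (A + x) - w (A + y)|, so that the expectation is S divided by at most
  k n (n choose k). Moving e one element towards f and using the triangle inequality gives
  P_(m+1) \<le> 2^k n^m S + k n P_m, since each local difference and each pair at distance m is met
  boundedly often; hence P_j \<le> (2^k + k)^k n^(k-1) S for all j \<le> k. As w sums to zero,
  (n choose k) |w|_1 = \<Sum>_e |\<Sum>_f (w e - w f)| \<le> \<Sum>_j P_j.\<close>

lemma sum_comp_le_card_fibre_mult:
  fixes F :: "'b \<Rightarrow> real"
  assumes "finite X" "finite Y" "\<phi> ` X \<subseteq> Y"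
    and "\<And>y. y \<in> Y \<Longrightarrow> card {x\<in>X. \<phi> x = y} \<le> M"
    and "\<And>y. y \<in> Y \<Longrightarrow> F y \<ge> 0"
  shows "(\<Sum>x\<in>X. F (\<phi> x)) \<le> real M * (\<Sum>y\<in>Y. F y)"
proof -
  have "(\<Sum>x\<in>X. F (\<phi> x)) = (\<Sum>y\<in>Y. \<Sum>x\<in>{x\<in>X. \<phi> x = y}. F (\<phi> x))"
    using sum.group[OF assms(1-3), of "\<lambda>x. F (\<phi> x)"] by simp
  also have "\<dots> = (\<Sum>y\<in>Y. real (card {x\<in>X. \<phi> x = y}) * F y)"
    by (rule sum.cong) auto
  also have "\<dots> \<le> (\<Sum>y\<in>Y. real M * F y)"
    by (rule sum_mono, rule mult_right_mono) (use assms(4,5) in auto)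
  finally show ?thesis by (simp add: sum_distrib_left)
qed

lemma card_mult_sum_abs_le_sum_abs_diff:
  fixes w :: "'a \<Rightarrow> real"
  assumes "(\<Sum>e\<in>E. w e) = 0"
  shows "real (card E) * (\<Sum>e\<in>E. \<bar>w e\<bar>) \<le> (\<Sum>(e, f)\<in>E \<times> E. \<bar>w e - w f\<bar>)"
proof -
  have "\<And>e. (\<Sum>f\<in>E. w e - w f) = real (card E) * w e"
    using assms by (simp add: sum_subtractf)
  then have "real (card E) * (\<Sum>e\<in>E. \<bar>w e\<bar>) = (\<Sum>e\<in>E. \<bar>\<Sum>f\<in>E. w e - w f\<bar>)"
    by (simp add: sum_distrib_left abs_mult)
  also have "\<dots> \<le> (\<Sum>e\<in>E. \<Sum>f\<in>E. \<bar>w e - w f\<bar>)"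
    by (rule sum_mono) (rule sum_abs)
  also have "\<dots> = (\<Sum>(e, f)\<in>E \<times> E. \<bar>w e - w f\<bar>)"
    by (simp add: sum.cartesian_product)
  finally show ?thesis .
qed

lemma finite_ksets: "finite (ksets n k)"
  unfolding ksets_def by (rule finite_subset[of _ "Pow {1..n}"]) auto

lemma ksets_memD:
  assumes "e \<in> ksets n k"
  shows "finite e" "card e = k" "e \<subseteq> {1..n}"
  using assms unfolding ksets_def by (auto intro: finite_subset)

lemma card_ksets_le_power: "card (ksets n k) \<le> n ^ k"
proof -
  have "card (ksets n k) = n choose k"
    using n_subsets[of "{1..n}" k] by (simp add: ksets_def)
  then show ?thesis
    by (cases "k \<le> n") (simp_all add: binomial_le_pow binomial_eq_0)
qed

lemma card_Diff_ksets_commute: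
  assumes "e \<in> ksets n k" "f \<in> ksets n k"
  shows "card (e - f) = card (f - e)"
  using assms by (metis card_le_sym_Diff ksets_memD le_antisym order_refl)

lemma finite_triples: "finite (triples n k)"
  unfolding triples_def
  by (rule finite_subset[of _ "ksets n (k - 1) \<times> {1..n} \<times> {1..n}"]) (auto simp: finite_ksets)

lemma card_triples_le:
  assumes "k \<ge> 1"
  shows "card (triples n k) \<le> card (ksets n k) * k * n"
proof -
  let ?h = "\<lambda>(A, x, y). (insert x A, x, y)"
  let ?E = "Sigma (ksets n k) (\<lambda>e. e \<times> {1..n})"
  have "inj_on ?h (triples n k)"
    by (rule inj_onI) (auto simp: triples_def dest: insert_ident)
  moreover have "?h ` triples n k \<subseteq> ?E"
  proof (rule image_subsetI)
    fix t assume t: "t \<in> triples n k"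
    obtain A x y where t_eq: "t = (A, x, y)" by (cases t)
    have A: "A \<in> ksets n (k - 1)" and x: "x \<in> {1..n}" "x \<notin> A" and y: "y \<in> {1..n}"
      using t unfolding t_eq triples_def by auto
    have "insert x A \<in> ksets n k"
      using ksets_memD[OF A] x assms by (auto simp: ksets_def)
    with x y show "?h t \<in> ?E"
      unfolding t_eq by simp
  qed
  moreover have "finite ?E"
    by (rule finite_SigmaI[OF finite_ksets]) (auto dest: ksets_memD)
  ultimately have "card (triples n k) \<le> card ?E"
    by (intro card_inj_on_le)
  also have "\<dots> = (\<Sum>e\<in>ksets n k. card (e \<times> {1..n}))"
    by (rule card_SigmaI[OF finite_ksets]) (auto dest: ksets_memD)
  also have "\<dots> = (\<Sum>e\<in>ksets n k. k * n)"
    by (intro sum.cong) (auto simp: card_cartesian_product dest: ksets_memD)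
  finally show ?thesis by simp
qed

definition pairs_at_distance :: "nat \<Rightarrow> nat \<Rightarrow> nat \<Rightarrow> (nat set \<times> nat set) set" where
  "pairs_at_distance n k j = {(e, f). e \<in> ksets n k \<and> f \<in> ksets n k \<and> card (e - f) = j}"

definition pair_variation :: "nat \<Rightarrow> nat \<Rightarrow> (nat set \<Rightarrow> real) \<Rightarrow> nat \<Rightarrow> real" where
  "pair_variation n k w j = (\<Sum>(e, f)\<in>pairs_at_distance n k j. \<bar>w e - w f\<bar>)"

definition local_variation :: "nat \<Rightarrow> nat \<Rightarrow> (nat set \<Rightarrow> real) \<Rightarrow> real" where
  "local_variation n k w = (\<Sum>(A, x, y)\<in>triples n k. \<bar>w (insert x A) - w (insert y A)\<bar>)"

definition swap :: "nat set \<Rightarrow> nat \<Rightarrow> nat \<Rightarrow> nat set" where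
  "swap e x y = insert y (e - {x})"

definition swap_moves :: "nat \<Rightarrow> nat \<Rightarrow> nat \<Rightarrow> ((nat set \<times> nat set) \<times> nat \<times> nat) set" where
  "swap_moves n k j = Sigma (pairs_at_distance n k j) (\<lambda>(e, f). (e - f) \<times> (f - e))"

lemma finite_pairs_at_distance: "finite (pairs_at_distance n k j)"
  unfolding pairs_at_distance_def
  by (rule finite_subset[of _ "ksets n k \<times> ksets n k"]) (auto simp: finite_ksets)

lemma finite_swap_moves: "finite (swap_moves n k j)"
  unfolding swap_moves_def using finite_pairs_at_distance
  by (auto intro!: finite_SigmaI dest: ksets_memD simp: pairs_at_distance_def)

lemma swap_moves_memD:
  assumes "((e, f), x, y) \<in> swap_moves n k j"
  shows "e \<in> ksets n k" "f \<in> ksets n k" "card (e - f) = j"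
    and "x \<in> e" "x \<notin> f" "y \<in> f" "y \<notin> e"
  using assms by (auto simp: swap_moves_def pairs_at_distance_def)

lemma swap_move_step:
  assumes "((e, f), x, y) \<in> swap_moves n k (Suc m)"
  shows "e - {x} \<in> ksets n (k - 1)" "swap e x y \<in> ksets n k" "card (swap e x y - f) = m"
proof -
  note move = swap_moves_memD[OF assms]
  have card_e: "card (e - {x}) = k - 1"
    using move ksets_memD[OF move(1)] by simp
  with move show "e - {x} \<in> ksets n (k - 1)"
    by (auto simp: ksets_def)
  have "k \<ge> 1"
    using move(4) ksets_memD[OF move(1)] by (metis card_0_eq empty_iff less_one not_le)
  with card_e move show "swap e x y \<in> ksets n k"
    using ksets_memD[OF move(1)] ksets_memD[OF move(2)] by (auto simp: swap_def ksets_def)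
  have "swap e x y - f = (e - f) - {x}"
    using move by (auto simp: swap_def)
  with move show "card (swap e x y - f) = m"
    by simp
qed

lemma local_variation_nonneg: "local_variation n k w \<ge> 0"
  unfolding local_variation_def by (rule sum_nonneg) auto

lemma pair_variation_0: "pair_variation n k w 0 = 0"
proof -
  have diagonal: "e = f" if "(e, f) \<in> pairs_at_distance n k 0" for e f
  proof (rule card_subset_eq)
    show "finite f" "card e = card f" "e \<subseteq> f"
      using that ksets_memD[of e n k] ksets_memD[of f n k] by (auto simp: pairs_at_distance_def)
  qed
  show ?thesis
    unfolding pair_variation_def by (intro sum.neutral) (auto dest: diagonal)
qed

text \<open>The second leg (swap e x y, f) of a swap move is a pair at distance m; a pair (g, f) arises
  from at most k n moves, since e is recovered from g by undoing the swap.\<close>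
lemma second_leg_le:
  "(\<Sum>((e, f), x, y)\<in>swap_moves n k (Suc m). \<bar>w (swap e x y) - w f\<bar>)
     \<le> real (k * n) * pair_variation n k w m"
proof -
  let ?\<phi> = "\<lambda>((e, f), x, y). (swap e x y, f)"
  have "(\<Sum>((e, f), x, y)\<in>swap_moves n k (Suc m). \<bar>w (swap e x y) - w f\<bar>)
      = (\<Sum>z\<in>swap_moves n k (Suc m). (\<lambda>(g, f). \<bar>w g - w f\<bar>) (?\<phi> z))"
    by (rule sum.cong) auto
  also have "\<dots> \<le> real (k * n) * pair_variation n k w m"
    unfolding pair_variation_def
  proof (rule sum_comp_le_card_fibre_mult[OF finite_swap_moves finite_pairs_at_distance])
    show "?\<phi> ` swap_moves n k (Suc m) \<subseteq> pairs_at_distance n k m"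
      by (auto simp: pairs_at_distance_def dest: swap_move_step swap_moves_memD)
  next
    fix r assume r: "r \<in> pairs_at_distance n k m"
    obtain g f where r_eq: "r = (g, f)" by (cases r)
    have g: "g \<in> ksets n k"
      using r unfolding r_eq pairs_at_distance_def by simp
    let ?\<psi> = "\<lambda>(y, x). ((swap g y x, f), x, y)"
    have "{z \<in> swap_moves n k (Suc m). ?\<phi> z = r} \<subseteq> ?\<psi> ` (g \<times> {1..n})"
    proof
      fix z assume z: "z \<in> {z \<in> swap_moves n k (Suc m). ?\<phi> z = r}"
      obtain e f' x y where z_eq: "z = ((e, f'), x, y)" by (metis prod.collapse)
      have move: "((e, f'), x, y) \<in> swap_moves n k (Suc m)"
        and g_eq: "g = swap e x y" and "f' = f"
        using z r_eq unfolding z_eq by auto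
      note facts = swap_moves_memD[OF move]
      have "e = swap g y x"
        using g_eq facts by (auto simp: swap_def)
      moreover have "x \<in> {1..n}"
        using facts ksets_memD(3)[OF facts(1)] by auto
      moreover have "y \<in> g"
        using g_eq by (simp add: swap_def)
      ultimately show "z \<in> ?\<psi> ` (g \<times> {1..n})"
        using \<open>f' = f\<close> unfolding z_eq by force
    qed
    then have "card {z \<in> swap_moves n k (Suc m). ?\<phi> z = r} \<le> card (g \<times> {1..n})"
      by (rule surj_card_le[rotated]) (simp add: ksets_memD[OF g])
    also have "\<dots> = k * n"
      by (simp add: card_cartesian_product ksets_memD[OF g])
    finally show "card {z \<in> swap_moves n k (Suc m). ?\<phi> z = r} \<le> k * n" .
  qed auto
  finally show ?thesis .
qed

text \<open>The first leg (e, swap e x y) is the local difference at the triple (e - {x}, x, y); a triple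
  (A, x, y) arises from at most 2^k n^m moves, since e = A + x and f is determined by f \<inter> A and
  the m-set (f - e) - {y}.\<close>
lemma first_leg_le:
  "(\<Sum>((e, f), x, y)\<in>swap_moves n k (Suc m). \<bar>w e - w (swap e x y)\<bar>)
     \<le> real (2 ^ k * n ^ m) * local_variation n k w"
proof -
  let ?\<phi> = "\<lambda>((e, f), x, y). (e - {x}, x, y)"
  let ?F = "\<lambda>(A, x, y). \<bar>w (insert x A) - w (insert y A)\<bar>"
  have "(\<Sum>((e, f), x, y)\<in>swap_moves n k (Suc m). \<bar>w e - w (swap e x y)\<bar>)
      = (\<Sum>z\<in>swap_moves n k (Suc m). ?F (?\<phi> z))"
    by (rule sum.cong) (auto simp: swap_def insert_absorb dest: swap_moves_memD)
  also have "\<dots> \<le> real (2 ^ k * n ^ m) * local_variation n k w"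
    unfolding local_variation_def
  proof (rule sum_comp_le_card_fibre_mult[OF finite_swap_moves finite_triples])
    show "?\<phi> ` swap_moves n k (Suc m) \<subseteq> triples n k"
    proof clarify
      fix e f x y assume move: "((e, f), x, y) \<in> swap_moves n k (Suc m)"
      note facts = swap_moves_memD[OF move]
      have "x \<in> {1..n}" "y \<in> {1..n}"
        using facts ksets_memD(3)[OF facts(1)] ksets_memD(3)[OF facts(2)] by auto
      with facts swap_move_step(1)[OF move] show "(e - {x}, x, y) \<in> triples n k"
        unfolding triples_def by auto
    qed
  next
    fix r assume r: "r \<in> triples n k"
    obtain A x y where r_eq: "r = (A, x, y)" by (cases r)
    have A: "A \<in> ksets n (k - 1)"
      using r unfolding r_eq triples_def by simp
    let ?\<psi> = "\<lambda>(U, Z). ((insert x A, U \<union> insert y Z), x, y)"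
    have "{z \<in> swap_moves n k (Suc m). ?\<phi> z = r} \<subseteq> ?\<psi> ` (Pow A \<times> ksets n m)"
    proof
      fix z assume z: "z \<in> {z \<in> swap_moves n k (Suc m). ?\<phi> z = r}"
      obtain e f x' y' where z_eq: "z = ((e, f), x', y')" by (metis prod.collapse)
      have move: "((e, f), x, y) \<in> swap_moves n k (Suc m)" and A_eq: "A = e - {x}"
        using z r_eq unfolding z_eq by auto
      note facts = swap_moves_memD[OF move]
      have e_eq: "e = insert x A"
        using A_eq facts by auto
      have "card (f - e) = Suc m"
        using facts card_Diff_ksets_commute[OF facts(1,2)] by simp
      then have "(f - e) - {y} \<in> ksets n m"
        using facts ksets_memD[OF facts(2)] by (auto simp: ksets_def)
      moreover have "f = (f \<inter> A) \<union> insert y ((f - e) - {y})"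
        using e_eq facts by auto
      ultimately show "z \<in> ?\<psi> ` (Pow A \<times> ksets n m)"
        using z r_eq e_eq unfolding z_eq
        by (intro image_eqI[where x = "(f \<inter> A, (f - e) - {y})"]) auto
    qed
    then have "card {z \<in> swap_moves n k (Suc m). ?\<phi> z = r} \<le> card (Pow A \<times> ksets n m)"
      by (rule surj_card_le[rotated]) (simp add: finite_ksets ksets_memD[OF A])
    also have "\<dots> = 2 ^ (k - 1) * card (ksets n m)"
      by (simp add: card_cartesian_product card_Pow ksets_memD[OF A])
    also have "\<dots> \<le> 2 ^ k * n ^ m"
      by (rule mult_le_mono[OF _ card_ksets_le_power]) simp
    finally show "card {z \<in> swap_moves n k (Suc m). ?\<phi> z = r} \<le> 2 ^ k * n ^ m" .
  qed auto
  finally show ?thesis .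
qed

lemma pair_variation_Suc_le:
  "pair_variation n k w (Suc m)
     \<le> real (2 ^ k * n ^ m) * local_variation n k w + real (k * n) * pair_variation n k w m"
proof -
  let ?G = "\<lambda>e f x y. \<bar>w e - w (swap e x y)\<bar> + \<bar>w (swap e x y) - w f\<bar>"
  have "pair_variation n k w (Suc m)
      \<le> (\<Sum>(e, f)\<in>pairs_at_distance n k (Suc m). \<Sum>(x, y)\<in>(e - f) \<times> (f - e). ?G e f x y)"
    unfolding pair_variation_def
  proof (rule sum_mono, clarify)
    fix e f assume ef: "(e, f) \<in> pairs_at_distance n k (Suc m)"
    then have e: "e \<in> ksets n k" and f: "f \<in> ksets n k" and "card (e - f) = Suc m"
      by (auto simp: pairs_at_distance_def)
    moreover have "card (f - e) = Suc m"
      using calculation card_Diff_ksets_commute[OF e f] by simp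
    ultimately obtain x y where xy: "(x, y) \<in> (e - f) \<times> (f - e)"
      by (metis card.empty ex_in_conv mem_Sigma_iff nat.distinct(1))
    have "\<bar>w e - w f\<bar> \<le> ?G e f x y"
      by simp
    also have "\<dots> \<le> (\<Sum>(x, y)\<in>(e - f) \<times> (f - e). ?G e f x y)"
      using member_le_sum[OF xy, of "\<lambda>(x, y). ?G e f x y"] ksets_memD(1)[OF e] ksets_memD(1)[OF f]
      by auto
    finally show "\<bar>w e - w f\<bar> \<le> (\<Sum>(x, y)\<in>(e - f) \<times> (f - e). ?G e f x y)" .
  qed
  also have "\<dots> = (\<Sum>((e, f), x, y)\<in>swap_moves n k (Suc m). ?G e f x y)"
    unfolding swap_moves_def split_def
  proof (subst sum.Sigma)
    show "\<forall>p\<in>pairs_at_distance n k (Suc m). finite ((fst p - snd p) \<times> (snd p - fst p))"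
      by (auto simp: pairs_at_distance_def dest: ksets_memD(1))
  qed (simp_all add: finite_pairs_at_distance split_def)
  also have "\<dots> = (\<Sum>((e, f), x, y)\<in>swap_moves n k (Suc m). \<bar>w e - w (swap e x y)\<bar>)
      + (\<Sum>((e, f), x, y)\<in>swap_moves n k (Suc m). \<bar>w (swap e x y) - w f\<bar>)"
    by (simp add: sum.distrib split_def)
  also have "\<dots> \<le> real (2 ^ k * n ^ m) * local_variation n k w + real (k * n) * pair_variation n k w m"
    using first_leg_le second_leg_le by (rule add_mono)
  finally show ?thesis .
qed

lemma pair_variation_Suc_le_power:
  "pair_variation n k w (Suc m) \<le> (2 ^ k + real k) ^ Suc m * real n ^ m * local_variation n k w"
proof (induction m)
  case 0
  have "(2::real) ^ k * local_variation n k w \<le> (2 ^ k + real k) * local_variation n k w"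
    using local_variation_nonneg[of n k w] by (intro mult_right_mono) auto
  then show ?case
    using pair_variation_Suc_le[of n k w 0] by (simp add: pair_variation_0)
next
  case (Suc m)
  define B where "B = (2 ^ k + real k :: real)"
  define S where "S = local_variation n k w"
  have "(1::real) \<le> 2 ^ k" by simp
  then have B_pow: "1 \<le> B ^ Suc m"
    unfolding B_def by (intro one_le_power) linarith
  have S: "S \<ge> 0"
    unfolding S_def by (rule local_variation_nonneg)
  have "pair_variation n k w (Suc (Suc m))
      \<le> real (2 ^ k * n ^ Suc m) * S + real (k * n) * pair_variation n k w (Suc m)"
    unfolding S_def by (rule pair_variation_Suc_le)
  also have "\<dots> \<le> real (2 ^ k * n ^ Suc m) * S + real (k * n) * (B ^ Suc m * real n ^ m * S)"
    using Suc.IH unfolding B_def S_def by (intro add_left_mono mult_left_mono) auto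
  also have "\<dots> = (2 ^ k + real k * B ^ Suc m) * (real n ^ Suc m * S)"
    by (simp add: algebra_simps)
  also have "\<dots> \<le> (B ^ Suc m * 2 ^ k + real k * B ^ Suc m) * (real n ^ Suc m * S)"
    using B_pow S by (intro mult_right_mono add_right_mono) auto
  also have "\<dots> = B ^ Suc (Suc m) * real n ^ Suc m * S"
    unfolding B_def by (simp add: algebra_simps)
  finally show ?case
    unfolding B_def S_def .
qed

lemma sum_abs_diff_ksets_le_local_variation:
  assumes "n \<ge> 1"
  shows "(\<Sum>(e, f)\<in>ksets n k \<times> ksets n k. \<bar>w e - w f\<bar>)
     \<le> real (k + 1) * (2 ^ k + real k) ^ k * real n ^ (k - 1) * local_variation n k w"
proof -
  define B where "B = (2 ^ k + real k :: real)"
  have "(1::real) \<le> 2 ^ k" by simp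
  then have B: "B \<ge> 1"
    unfolding B_def by linarith
  have S: "local_variation n k w \<ge> 0"
    by (rule local_variation_nonneg)
  have distances: "(\<lambda>(e, f). card (e - f)) ` (ksets n k \<times> ksets n k) \<subseteq> {..k}"
    by (auto intro!: le_trans[OF card_mono[OF _ Diff_subset]] dest: ksets_memD)
  have fibres: "{p \<in> ksets n k \<times> ksets n k. (\<lambda>(e, f). card (e - f)) p = j} = pairs_at_distance n k j"
    for j by (auto simp: pairs_at_distance_def)
  have "(\<Sum>(e, f)\<in>ksets n k \<times> ksets n k. \<bar>w e - w f\<bar>) = (\<Sum>j\<le>k. pair_variation n k w j)"
    using sum.group[OF _ finite_atMost distances, of "\<lambda>(e, f). \<bar>w e - w f\<bar>"]
    by (simp add: finite_ksets fibres pair_variation_def)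
  also have "\<dots> \<le> (\<Sum>j\<le>k. B ^ k * real n ^ (k - 1) * local_variation n k w)"
  proof (rule sum_mono)
    fix j assume j: "j \<in> {..k}"
    show "pair_variation n k w j \<le> B ^ k * real n ^ (k - 1) * local_variation n k w"
    proof (cases j)
      case 0
      then show ?thesis
        using S B by (simp add: pair_variation_0)
    next
      case (Suc m)
      have "pair_variation n k w j \<le> B ^ Suc m * real n ^ m * local_variation n k w"
        using pair_variation_Suc_le_power[of n k w m] Suc unfolding B_def by simp
      also have "\<dots> \<le> B ^ k * real n ^ (k - 1) * local_variation n k w"
        using j Suc B assms S by (intro mult_right_mono mult_mono power_increasing) auto
      finally show ?thesis .
    qed
  qed
  also have "\<dots> = real (k + 1) * B ^ k * real n ^ (k - 1) * local_variation n k w"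
    by simp
  finally show ?thesis
    unfolding B_def .
qed

lemma norm1_le_exp_diff:
  assumes "1 \<le> k" "k \<le> n" "total_weight n k w = 0"
  shows "norm1 n k w \<le> real k * real (k + 1) * (2 ^ k + real k) ^ k * real n ^ k * exp_diff n k w"
proof -
  define N where "N = card (ksets n k)"
  define C where "C = real (k + 1) * (2 ^ k + real k) ^ k * real n ^ (k - 1)"
  define S where "S = local_variation n k w"
  have "{1..k} \<in> ksets n k"
    using assms(2) by (auto simp: ksets_def)
  then have N: "N > 0"
    unfolding N_def using finite_ksets card_gt_0_iff by blast
  have C: "C \<ge> 0"
    unfolding C_def by simp
  have exp_diff_eq: "exp_diff n k w = S / real (card (triples n k))"
    unfolding exp_diff_def S_def local_variation_def ..
  have S_le: "S \<le> real (N * k * n) * exp_diff n k w"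
  proof (cases "card (triples n k) = 0")
    case True
    then show ?thesis
      using finite_triples by (simp add: S_def local_variation_def exp_diff_def)
  next
    case False
    have "S = real (card (triples n k)) * exp_diff n k w"
      using False by (simp add: exp_diff_eq)
    also have "\<dots> \<le> real (N * k * n) * exp_diff n k w"
    proof (rule mult_right_mono)
      show "real (card (triples n k)) \<le> real (N * k * n)"
        using card_triples_le[OF assms(1), of n] unfolding N_def by (simp only: of_nat_le_iff)
      show "exp_diff n k w \<ge> 0"
        using local_variation_nonneg[of n k w] unfolding exp_diff_eq S_def by simp
    qed
    finally show ?thesis .
  qed
  have "n \<ge> 1"
    using assms by simp
  have "real N * norm1 n k w \<le> C * S"
    using card_mult_sum_abs_le_sum_abs_diff[of w "ksets n k"]
      sum_abs_diff_ksets_le_local_variation[OF \<open>n \<ge> 1\<close>, of w k] assms(3)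
    unfolding N_def C_def S_def total_weight_def norm1_def by simp
  also have "\<dots> \<le> C * (real (N * k * n) * exp_diff n k w)"
    using S_le C by (rule mult_left_mono)
  also have "\<dots> = real N * (real k * real (k + 1) * (2 ^ k + real k) ^ k * real n ^ k * exp_diff n k w)"
    using assms(1) unfolding C_def by (simp add: power_eq_if algebra_simps)
  finally show ?thesis
    using N by simp
qed

theorem proposition3p3:
  fixes k :: nat
  assumes "k \<ge> 1"
  shows "\<exists>c>0. \<forall>n>k. \<forall>w :: nat set \<Rightarrow> real.
           total_weight n k w = 0 \<longrightarrow>
           exp_diff n k w \<ge> c * real n powr (- real k) * norm1 n k w"
proof (intro exI conjI allI impI)
  define D where "D = real k * real (k + 1) * (2 ^ k + real k) ^ k"
  have D: "D > 0"
    unfolding D_def using assms by (intro mult_pos_pos zero_less_power add_pos_nonneg) auto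
  then show "1 / D > 0"
    by simp
  fix n :: nat and w :: "nat set \<Rightarrow> real"
  assume "n > k" and "total_weight n k w = 0"
  then have "norm1 n k w \<le> D * real n ^ k * exp_diff n k w"
    using assms norm1_le_exp_diff unfolding D_def by simp
  moreover have "D * real n ^ k > 0"
    using D \<open>n > k\<close> by simp
  ultimately show "1 / D * real n powr (- real k) * norm1 n k w \<le> exp_diff n k w"
    using \<open>n > k\<close> by (simp add: powr_minus powr_realpow field_simps)
qed

end
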